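(* Let $\Gamma(\mathbf{v})$ be a covariance matrix, viewed as an $N\times N$ block matrix with blocks $\Gamma_{\alpha\beta}$, and suppose $\Gamma(\mathbf{v})\in\mathcal{BC}_2$ (block coherence number at most two). Let $S$ be any set of unordered pairs $\{\alpha,\beta\}$ with $\alpha\neq\beta$, and let $\Gamma'$ be obtained from $\Gamma(\mathbf{v})$ by replacing $\Gamma_{\alpha\beta}$ by $-\Gamma_{\alpha\beta}$ and $\Gamma_{\beta\alpha}$ by $-\Gamma_{\beta\alpha}$ for every $\{\alpha,\beta\}\in S$ (all other blocks unchanged). Then $\Gamma'$ is positive semidefinite.
   Context: The covariance matrix of a distribution $p(x_1,\dots,x_N)$ is $\Gamma(\mathbf{v})=E(\mathbf{v}\mathbf{v}^\dagger)-E(\mathbf{v})E(\mathbf{v})^\dagger$, where $\mathbf{v}_{x_1,\dots,x_N}=|x_1\rangle+\dots+|x_N\rangle$ with $|x_n\rangle$ a basis vector of $\mathcal{V}_n$, the spaces $\mathcal{V}_1,\dots,\mathcal{V}_N$ mutually orthogonal, $E(\mathbf{v}\mathbf{v}^\dagger)=\sum_x\mathbf{v}_x\mathbf{v}_x^\dagger p(x)$, $E(\mathbf{v})=\sum_x\mathbf{v}_xp(x)$; block $\Gamma_{\alpha\beta}=P_\alpha\Gamma P_\beta$ where $P_n$ is the orthogonal projector onto $\mathcal{V}_n$. $\mathcal{BC}_2$ is the set of all finite sums of operators $|\psi\rangle\langle\psi|$ where $|\psi\rangle$ has at most two nonzero components $P_n|\psi\rangle$. *)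

theory Defs
  imports Complex_Main "HOL-Library.FuncSet" "HOL-Library.Complex_Order"
begin

text \<open>Setting: N parties; party n has outcomes {0..<d n}, which label an
orthonormal basis of the space V_n.  The direct sum V_1 + ... + V_N has
orthonormal basis indexed by pairs (n,k) with n < N and k < d n; the block
of index (n,k) is n.\<close>

definition idx :: "nat \<Rightarrow> (nat \<Rightarrow> nat) \<Rightarrow> (nat \<times> nat) set" where
  "idx N d = {(n,k). n < N \<and> k < d n}"

definition outcomes :: "nat \<Rightarrow> (nat \<Rightarrow> nat) \<Rightarrow> (nat \<Rightarrow> nat) set" where
  "outcomes N d = (\<Pi>\<^sub>E n\<in>{..<N}. {..<d n})"

definition is_distribution ::
  "nat \<Rightarrow> (nat \<Rightarrow> nat) \<Rightarrow> ((nat \<Rightarrow> nat) \<Rightarrow> real) \<Rightarrow> bool" where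
  "is_distribution N d p \<longleftrightarrow>
     (\<forall>x\<in>outcomes N d. 0 \<le> p x) \<and> (\<Sum>x\<in>outcomes N d. p x) = 1"

text \<open>v_x = |x_1> + ... + |x_N>, as a coordinate vector.\<close>
definition vvec :: "(nat \<Rightarrow> nat) \<Rightarrow> nat \<times> nat \<Rightarrow> real" where
  "vvec x i = (if x (fst i) = snd i then 1 else 0)"

definition covariance ::
  "nat \<Rightarrow> (nat \<Rightarrow> nat) \<Rightarrow> ((nat \<Rightarrow> nat) \<Rightarrow> real) \<Rightarrow> nat \<times> nat \<Rightarrow> nat \<times> nat \<Rightarrow> complex" where
  "covariance N d p i j = complex_of_real
     ((\<Sum>x\<in>outcomes N d. vvec x i * vvec x j * p x)
      - (\<Sum>x\<in>outcomes N d. vvec x i * p x) * (\<Sum>x\<in>outcomes N d. vvec x j * p x))"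

definition nblocks :: "nat \<Rightarrow> (nat \<Rightarrow> nat) \<Rightarrow> (nat \<times> nat \<Rightarrow> complex) \<Rightarrow> nat" where
  "nblocks N d \<psi> = card {n. n < N \<and> (\<exists>k < d n. \<psi> (n,k) \<noteq> 0)}"

definition in_BC2 :: "nat \<Rightarrow> (nat \<Rightarrow> nat) \<Rightarrow> (nat \<times> nat \<Rightarrow> nat \<times> nat \<Rightarrow> complex) \<Rightarrow> bool" where
  "in_BC2 N d M \<longleftrightarrow> (\<exists>(\<Psi> :: (nat \<times> nat \<Rightarrow> complex) set). finite \<Psi> \<and>
      (\<forall>\<psi>\<in>\<Psi>. nblocks N d \<psi> \<le> 2) \<and>
      (\<forall>i\<in>idx N d. \<forall>j\<in>idx N d. M i j = (\<Sum>\<psi>\<in>\<Psi>. \<psi> i * cnj (\<psi> j))))"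

definition psd :: "nat \<Rightarrow> (nat \<Rightarrow> nat) \<Rightarrow> (nat \<times> nat \<Rightarrow> nat \<times> nat \<Rightarrow> complex) \<Rightarrow> bool" where
  "psd N d M \<longleftrightarrow> (\<forall>z :: nat \<times> nat \<Rightarrow> complex.
      0 \<le> (\<Sum>i\<in>idx N d. \<Sum>j\<in>idx N d. cnj (z i) * M i j * z j))"

definition flip_blocks :: "nat set set \<Rightarrow> (nat \<times> nat \<Rightarrow> nat \<times> nat \<Rightarrow> complex)
    \<Rightarrow> nat \<times> nat \<Rightarrow> nat \<times> nat \<Rightarrow> complex" where
  "flip_blocks S M i j = (if {fst i, fst j} \<in> S then - M i j else M i j)"

end

theory Submission
  imports Defs
begin

text \<open>Flipping the signs of the blocks \<open>\<Gamma>\<^sub>\<alpha>\<^sub>\<beta>\<close>, \<open>{\<alpha>,\<beta>} \<in> S\<close>, is a switching of the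
complete graph on the blocks.  On a rank-one term \<open>\<psi>\<psi>\<^sup>\<dagger>\<close> supported on at most two blocks
every switching is balanced: it is realised by multiplying \<open>\<psi>\<close> blockwise with signs \<open>\<plusminus>1\<close>.
Hence the flipped matrix is again a sum of rank-one terms, so it is positive semidefinite.\<close>

lemma psd_sum_outer:
  fixes \<phi> :: "'a \<Rightarrow> nat \<times> nat \<Rightarrow> complex"
  assumes "\<And>i j. i \<in> idx N d \<Longrightarrow> j \<in> idx N d \<Longrightarrow> M i j = (\<Sum>t\<in>T. \<phi> t i * cnj (\<phi> t j))"
  shows "psd N d M"
  unfolding psd_def
proof
  fix z :: "nat \<times> nat \<Rightarrow> complex"
  define w where "w t = (\<Sum>i\<in>idx N d. cnj (z i) * \<phi> t i)" for t
  have "(\<Sum>i\<in>idx N d. \<Sum>j\<in>idx N d. cnj (z i) * M i j * z j)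
      = (\<Sum>i\<in>idx N d. \<Sum>j\<in>idx N d. \<Sum>t\<in>T. (cnj (z i) * \<phi> t i) * cnj (cnj (z j) * \<phi> t j))"
    using assms by (intro sum.cong refl) (simp add: sum_distrib_left sum_distrib_right mult_ac)
  also have "\<dots> = (\<Sum>t\<in>T. \<Sum>i\<in>idx N d. \<Sum>j\<in>idx N d. (cnj (z i) * \<phi> t i) * cnj (cnj (z j) * \<phi> t j))"
    by (subst sum.swap) (intro sum.cong refl sum.swap)
  also have "\<dots> = (\<Sum>t\<in>T. w t * cnj (w t))"
    unfolding w_def cnj_sum sum_product ..
  also have "0 \<le> \<dots>"
    by (intro sum_nonneg) (simp add: less_eq_complex_def)
  finally show "0 \<le> (\<Sum>i\<in>idx N d. \<Sum>j\<in>idx N d. cnj (z i) * M i j * z j)" .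
qed

lemma signing_of_card_le_2:
  fixes B :: "nat set" and S :: "nat set set"
  assumes "finite B" "card B \<le> 2" "\<And>n. {n} \<notin> S"
  obtains \<sigma> :: "nat \<Rightarrow> real"
  where "\<forall>a\<in>B. \<forall>b\<in>B. \<sigma> a * \<sigma> b = (if {a, b} \<in> S then -1 else 1)"
proof (cases "\<exists>a\<in>B. \<exists>b\<in>B. a \<noteq> b")
  case True
  then obtain a b where ab: "a \<in> B" "b \<in> B" "a \<noteq> b" by blast
  then have "B = {a, b}"
    using assms(1,2) by (intro card_seteq[symmetric]) auto
  then show ?thesis
    using assms(3) ab(3)
    by (intro that[of "\<lambda>n. if n = b \<and> {a, b} \<in> S then -1 else 1"]) (auto simp: insert_commute)
next
  case False
  then show ?thesis
    using assms(3) by (intro that[of "\<lambda>_. 1"]) auto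
qed

lemma flip_blocks_outer_signed:
  assumes \<sigma>: "\<forall>a\<in>B. \<forall>b\<in>B. \<sigma> a * \<sigma> b = (if {a, b} \<in> S then -1 else 1)"
    and "\<psi> i \<noteq> 0 \<Longrightarrow> fst i \<in> B" and "\<psi> j \<noteq> 0 \<Longrightarrow> fst j \<in> B"
  shows "flip_blocks S (\<lambda>i j. \<psi> i * cnj (\<psi> j)) i j
      = (of_real (\<sigma> (fst i)) * \<psi> i) * cnj (of_real (\<sigma> (fst j)) * \<psi> j)"
proof (cases "\<psi> i = 0 \<or> \<psi> j = 0")
  case False
  then have "of_real (\<sigma> (fst i) * \<sigma> (fst j)) = (if {fst i, fst j} \<in> S then -1 else (1 :: complex))"
    using \<sigma> assms(2,3) by simp
  then show ?thesis
    unfolding flip_blocks_def by (simp add: mult_ac split: if_splits)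
qed (auto simp: flip_blocks_def)

lemma flip_blocks_outer_two_blocks:
  assumes "nblocks N d \<psi> \<le> 2" and "\<And>n. {n} \<notin> S"
  obtains \<phi> where "\<forall>i\<in>idx N d. \<forall>j\<in>idx N d.
    flip_blocks S (\<lambda>i j. \<psi> i * cnj (\<psi> j)) i j = \<phi> i * cnj (\<phi> j)"
proof -
  define B where "B = {n. n < N \<and> (\<exists>k<d n. \<psi> (n, k) \<noteq> 0)}"
  have "finite B" "card B \<le> 2"
    using assms(1) by (simp_all add: B_def nblocks_def)
  then obtain \<sigma> :: "nat \<Rightarrow> real"
    where \<sigma>: "\<forall>a\<in>B. \<forall>b\<in>B. \<sigma> a * \<sigma> b = (if {a, b} \<in> S then -1 else 1)"
    using assms(2) by (rule signing_of_card_le_2)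
  show ?thesis
  proof (rule that[of "\<lambda>i. of_real (\<sigma> (fst i)) * \<psi> i"], intro ballI)
    fix i j assume "i \<in> idx N d" "j \<in> idx N d"
    then show "flip_blocks S (\<lambda>i j. \<psi> i * cnj (\<psi> j)) i j
        = (of_real (\<sigma> (fst i)) * \<psi> i) * cnj (of_real (\<sigma> (fst j)) * \<psi> j)"
      using \<sigma> by (intro flip_blocks_outer_signed[where B = B]) (auto simp: B_def idx_def)
  qed
qed

lemma psd_flip_blocks_BC2:
  assumes "in_BC2 N d M" and "\<And>n. {n} \<notin> S"
  shows "psd N d (flip_blocks S M)"
proof -
  obtain \<Psi> where nb: "\<forall>\<psi>\<in>\<Psi>. nblocks N d \<psi> \<le> 2"
    and M: "\<forall>i\<in>idx N d. \<forall>j\<in>idx N d. M i j = (\<Sum>\<psi>\<in>\<Psi>. \<psi> i * cnj (\<psi> j))"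
    using assms(1) unfolding in_BC2_def by blast
  have "\<forall>\<psi>\<in>\<Psi>. \<exists>\<phi>. \<forall>i\<in>idx N d. \<forall>j\<in>idx N d.
      flip_blocks S (\<lambda>i j. \<psi> i * cnj (\<psi> j)) i j = \<phi> i * cnj (\<phi> j)"
    using nb flip_blocks_outer_two_blocks[OF _ assms(2)] by metis
  then obtain \<phi> where \<phi>: "\<forall>\<psi>\<in>\<Psi>. \<forall>i\<in>idx N d. \<forall>j\<in>idx N d.
      flip_blocks S (\<lambda>i j. \<psi> i * cnj (\<psi> j)) i j = \<phi> \<psi> i * cnj (\<phi> \<psi> j)"
    by (rule bchoice[THEN exE])
  have "flip_blocks S M i j = (\<Sum>\<psi>\<in>\<Psi>. \<phi> \<psi> i * cnj (\<phi> \<psi> j))"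
    if "i \<in> idx N d" "j \<in> idx N d" for i j
  proof -
    have "flip_blocks S M i j = (\<Sum>\<psi>\<in>\<Psi>. flip_blocks S (\<lambda>i j. \<psi> i * cnj (\<psi> j)) i j)"
      using M that by (simp add: flip_blocks_def sum_negf)
    also have "\<dots> = (\<Sum>\<psi>\<in>\<Psi>. \<phi> \<psi> i * cnj (\<phi> \<psi> j))"
      using \<phi> that by simp
    finally show ?thesis .
  qed
  then show ?thesis
    by (rule psd_sum_outer)
qed

theorem mainTheorem4:
  fixes N :: nat and d :: "nat \<Rightarrow> nat" and p :: "(nat \<Rightarrow> nat) \<Rightarrow> real"
    and S :: "nat set set"
  assumes "is_distribution N d p"
    and "in_BC2 N d (covariance N d p)"
    and "\<forall>e\<in>S. \<exists>a b. a < N \<and> b < N \<and> a \<noteq> b \<and> e = {a, b}"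
  shows "psd N d (flip_blocks S (covariance N d p))"
proof (rule psd_flip_blocks_BC2[OF assms(2)])
  fix n
  show "{n} \<notin> S"
  proof
    assume "{n} \<in> S"
    then obtain a b where "a \<noteq> b" "{n} = {a, b}"
      using assms(3) by blast
    then show False
      by (metis insertCI singletonD)
  qed
qed

end
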